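(* Let $n\ge3$ and $c\ge1$. For every $t\in\{1,\dots,c\}$ and every $i\in\{1,\dots,n-2\}$, neither of the relations \[ \rho_i\sigma_{i+1,t}\sigma_{i,t}=\sigma_{i+1,t}\sigma_{i,t}\rho_{i+1},\qquad \rho_{i+1}\sigma_{i,t}\sigma_{i+1,t}=\sigma_{i,t}\sigma_{i+1,t}\rho_i \] holds in $UV_n(c)$; that is, imposing either relation yields a proper quotient of $UV_n(c)$.
   Context: $UV_n(c)$ is the group with generators $\rho_i$ ($1\le i\le n-1$), $\sigma_{i,t}$ ($1\le i\le n-1$, $1\le t\le c$) and relations $\rho_i\rho_{i+1}\rho_i=\rho_{i+1}\rho_i\rho_{i+1}$ ($1\le i\le n-2$), $\rho_i\rho_j=\rho_j\rho_i$ ($|i-j|\ge2$), $\rho_i^2=1$, $\sigma_{i,t}\sigma_{j,\ell}=\sigma_{j,\ell}\sigma_{i,t}$ ($|i-j|\ge2$, $1\le t,\ell\le c$), $\sigma_{i,t}\rho_j=\rho_j\sigma_{i,t}$ ($|i-j|\ge2$), $\rho_i\rho_{i+1}\sigma_{i,t}=\sigma_{i+1,t}\rho_i\rho_{i+1}$ ($1\le i\le n-2$, $1\le t\le c$). *)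

theory Defs
  imports Main
begin

datatype gen = Rho nat | Sig nat nat

text \<open>Group words: a letter (g, False) is g, (g, True) is g inverse.\<close>
type_synonym word = "(gen \<times> bool) list"

definition rho :: "nat \<Rightarrow> word" where "rho i = [(Rho i, False)]"
definition sig :: "nat \<Rightarrow> nat \<Rightarrow> word" where "sig i t = [(Sig i t, False)]"

definition uv_rels :: "nat \<Rightarrow> nat \<Rightarrow> (word \<times> word) set" where
  "uv_rels n c =
     {(rho i @ rho (i+1) @ rho i, rho (i+1) @ rho i @ rho (i+1)) | i. 1 \<le> i \<and> i \<le> n - 2}
   \<union> {(rho i @ rho j, rho j @ rho i) | i j. 1 \<le> i \<and> i \<le> n - 1 \<and> 1 \<le> j \<and> j \<le> n - 1
        \<and> (i + 2 \<le> j \<or> j + 2 \<le> i)}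
   \<union> {(rho i @ rho i, []) | i. 1 \<le> i \<and> i \<le> n - 1}
   \<union> {(sig i t @ sig j l, sig j l @ sig i t) | i j t l. 1 \<le> i \<and> i \<le> n - 1 \<and> 1 \<le> j \<and> j \<le> n - 1
        \<and> (i + 2 \<le> j \<or> j + 2 \<le> i) \<and> 1 \<le> t \<and> t \<le> c \<and> 1 \<le> l \<and> l \<le> c}
   \<union> {(sig i t @ rho j, rho j @ sig i t) | i j t. 1 \<le> i \<and> i \<le> n - 1 \<and> 1 \<le> j \<and> j \<le> n - 1
        \<and> (i + 2 \<le> j \<or> j + 2 \<le> i) \<and> 1 \<le> t \<and> t \<le> c}
   \<union> {(rho i @ rho (i+1) @ sig i t, sig (i+1) t @ rho i @ rho (i+1)) | i t.
        1 \<le> i \<and> i \<le> n - 2 \<and> 1 \<le> t \<and> t \<le> c}"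

inductive uv_eq :: "nat \<Rightarrow> nat \<Rightarrow> word \<Rightarrow> word \<Rightarrow> bool" for n c where
  refl: "uv_eq n c w w"
| sym: "uv_eq n c u v \<Longrightarrow> uv_eq n c v u"
| trans: "uv_eq n c u v \<Longrightarrow> uv_eq n c v w \<Longrightarrow> uv_eq n c u w"
| cancel: "uv_eq n c [(g, b), (g, \<not> b)] []"
| rel: "(u, v) \<in> uv_rels n c \<Longrightarrow> uv_eq n c u v"
| append: "uv_eq n c u v \<Longrightarrow> uv_eq n c u' v' \<Longrightarrow> uv_eq n c (u @ u') (v @ v')"

end

theory Submission
  imports Defs "HOL-Combinatorics.Transposition"
begin

text \<open>Sending rho_i to the transposition (i i+1) and every sigma_{i,t} to the identity
  respects all defining relations of UV_n(c), so it induces a homomorphism from UV_n(c) to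
  the permutations of the naturals. Both relations in question are sent to the false identity
  (i i+1) = (i+1 i+2), hence neither holds in UV_n(c).\<close>

fun perm_of_gen :: "gen \<Rightarrow> nat \<Rightarrow> nat" where
  "perm_of_gen (Rho i) = transpose i (Suc i)"
| "perm_of_gen (Sig i t) = id"

text \<open>The exponent of a letter is ignored: every generator is sent to an involution.\<close>
primrec perm_of_word :: "word \<Rightarrow> nat \<Rightarrow> nat" where
  "perm_of_word [] = id"
| "perm_of_word (x # w) = perm_of_gen (fst x) \<circ> perm_of_word w"

lemma perm_of_word_append [simp]:
  "perm_of_word (u @ v) = perm_of_word u \<circ> perm_of_word v"
  by (induction u) (simp_all add: comp_assoc)

lemma perm_of_word_rho [simp]: "perm_of_word (rho i) = transpose i (Suc i)"
  by (simp add: rho_def)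

lemma perm_of_word_sig [simp]: "perm_of_word (sig i t) = id"
  by (simp add: sig_def)

lemma perm_of_gen_involutory: "perm_of_gen g \<circ> perm_of_gen g = id"
  by (cases g) simp_all

lemma perm_of_word_uv_rels:
  assumes "(u, v) \<in> uv_rels n c"
  shows "perm_of_word u = perm_of_word v"
  using assms unfolding uv_rels_def
  by (auto simp: fun_eq_iff transpose_def)

lemma uv_eq_imp_perm_of_word_eq:
  assumes "uv_eq n c u v"
  shows "perm_of_word u = perm_of_word v"
  using assms
proof (induction rule: uv_eq.induct)
  case (cancel g b)
  show ?case by (simp add: perm_of_gen_involutory)
next
  case (rel u v)
  then show ?case by (rule perm_of_word_uv_rels)
qed simp_all

lemma adjacent_transpositions_ne: "transpose i (Suc i) \<noteq> transpose (Suc i) (Suc (Suc i))"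
proof
  assume "transpose i (Suc i) = transpose (Suc i) (Suc (Suc i))"
  then have "transpose i (Suc i) i = transpose (Suc i) (Suc (Suc i)) i" by simp
  then show False by simp
qed

theorem proposition5p1:
  fixes n c :: nat
  assumes "n \<ge> 3" and "c \<ge> 1"
  shows "\<forall>t \<in> {1..c}. \<forall>i \<in> {1..n-2}.
           \<not> uv_eq n c (rho i @ sig (i+1) t @ sig i t) (sig (i+1) t @ sig i t @ rho (i+1))
         \<and> \<not> uv_eq n c (rho (i+1) @ sig i t @ sig (i+1) t) (sig i t @ sig (i+1) t @ rho i)"
proof (intro ballI conjI notI)
  fix t i
  assume "uv_eq n c (rho i @ sig (i+1) t @ sig i t) (sig (i+1) t @ sig i t @ rho (i+1))"
  then have "transpose i (Suc i) = transpose (Suc i) (Suc (Suc i))"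
    by (auto dest: uv_eq_imp_perm_of_word_eq)
  then show False by (simp add: adjacent_transpositions_ne)
next
  fix t i
  assume "uv_eq n c (rho (i+1) @ sig i t @ sig (i+1) t) (sig i t @ sig (i+1) t @ rho i)"
  then have "transpose (Suc i) (Suc (Suc i)) = transpose i (Suc i)"
    by (auto dest: uv_eq_imp_perm_of_word_eq)
  then show False by (metis adjacent_transpositions_ne)
qed

end
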